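(* Let $T$ be an automorphism of a Lebesgue space $(X,\Sigma,\mu)$ and let $m\ge1$ be an integer. Then for every $g\in\mathcal{G}_0$ we have $h_\mu(g,T^m)\le m\,h_\mu(g,T)$.
   Context: $\mathcal{G}_0$ is the set of concave functions $g:[0,1]\to\mathbb{R}$ with $g(0)=\lim_{x\to0^+}g(x)=0$. For a measure-preserving $S$ and a finite measurable partition $\mathcal{P}$, let $\mathcal{P}_n^S=\bigvee_{i=0}^{n-1}S^{-i}\mathcal{P}$, $H(g,\mathcal{P})=\sum_{A\in\mathcal{P}}g(\mu(A))$, and $h_\mu(g,S,\mathcal{P})=\limsup_{n\to\infty}\frac1nH(g,\mathcal{P}_n^S)$. Finally, $h_\mu(g,S)=\sup_{\mathcal{P}\text{ finite}}h_\mu(g,S,\mathcal{P})$. *)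

theory Defs
  imports "HOL-Probability.Probability"
begin

definition G0 :: "(real \<Rightarrow> real) set" where
  "G0 = {g. concave_on {0..1} g \<and> g 0 = 0 \<and> (g \<longlongrightarrow> 0) (at_right 0)}"

text \<open>Lebesgue space (Rokhlin): a complete probability space which is isomorphic mod 0
  to the completion of a Borel probability measure on the real line.\<close>
definition lebesgue_space :: "'a measure \<Rightarrow> bool" where
  "lebesgue_space M \<longleftrightarrow> prob_space M \<and>
     (\<forall>A B. B \<in> null_sets M \<and> A \<subseteq> B \<longrightarrow> A \<in> sets M) \<and>
     (\<exists>(\<nu>::real measure) f N N'.
        sets \<nu> = sets borel \<and> prob_space \<nu> \<and>
        N \<in> null_sets M \<and> N' \<in> null_sets (completion \<nu>) \<and>
        bij_betw f (space M - N) (UNIV - N') \<and>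
        (\<forall>A. A \<subseteq> space M - N \<longrightarrow> (A \<in> sets M \<longleftrightarrow> f ` A \<in> sets (completion \<nu>))) \<and>
        (\<forall>A\<in>sets M. A \<subseteq> space M - N \<longrightarrow> measure M A = measure (completion \<nu>) (f ` A)))"

definition automorphism :: "'a measure \<Rightarrow> ('a \<Rightarrow> 'a) \<Rightarrow> bool" where
  "automorphism M T \<longleftrightarrow> bij_betw T (space M) (space M) \<and> T \<in> M \<rightarrow>\<^sub>M M \<and>
     inv_into (space M) T \<in> M \<rightarrow>\<^sub>M M \<and>
     (\<forall>A\<in>sets M. measure M (T -` A \<inter> space M) = measure M A)"

definition finite_partition :: "'a measure \<Rightarrow> 'a set set \<Rightarrow> bool" where
  "finite_partition M P \<longleftrightarrow> finite P \<and> P \<subseteq> sets M \<and> \<Union>P = space M \<and>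
     disjoint P"

definition iter_join :: "'a measure \<Rightarrow> ('a \<Rightarrow> 'a) \<Rightarrow> 'a set set \<Rightarrow> nat \<Rightarrow> 'a set set" where
  "iter_join M S P n = {space M \<inter> (\<Inter>i\<in>{..<n}. (S ^^ i) -` c i) | c. \<forall>i<n. c i \<in> P}"

definition gen_H :: "'a measure \<Rightarrow> (real \<Rightarrow> real) \<Rightarrow> 'a set set \<Rightarrow> real" where
  "gen_H M g P = (\<Sum>A\<in>P. g (measure M A))"

definition gen_entropy_part :: "'a measure \<Rightarrow> (real \<Rightarrow> real) \<Rightarrow> ('a \<Rightarrow> 'a) \<Rightarrow> 'a set set \<Rightarrow> ereal" where
  "gen_entropy_part M g S P = limsup (\<lambda>n. ereal (gen_H M g (iter_join M S P n) / real n))"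

definition gen_entropy :: "'a measure \<Rightarrow> (real \<Rightarrow> real) \<Rightarrow> ('a \<Rightarrow> 'a) \<Rightarrow> ereal" where
  "gen_entropy M g S = (SUP P\<in>{P. finite_partition M P}. gen_entropy_part M g S P)"

end

theory Submission
  imports Defs
begin

text \<open>A concave g with g(0) = 0 is subadditive on [0,1], so refining a partition can only
  increase H(g, -). Every cell of the (mn)-th T-join lies in a cell of the n-th T^m-join,
  hence H(g, P_n^{T^m}) \<le> H(g, P_{mn}^T); dividing by n = (mn)/m and passing to the
  subsequence mn of the limsup gives h(g, T^m, P) \<le> m h(g, T, P) for every P.\<close>

lemma concave_on_scale_ge:
  fixes g :: "real \<Rightarrow> real"
  assumes "concave_on {0..1} g" and "g 0 = 0"
    and "x \<in> {0..1}" and "0 \<le> t" and "t \<le> 1"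
  shows "t * g x \<le> g (t * x)"
  using concave_onD[OF assms(1), of t 0 x] assms(2-) by simp

lemma concave_on_subadditive:
  fixes g :: "real \<Rightarrow> real"
  assumes cc: "concave_on {0..1} g" and g0: "g 0 = 0"
    and "0 \<le> a" and "0 \<le> b" and "a + b \<le> 1"
  shows "g (a + b) \<le> g a + g b"
proof (cases "a + b = 0")
  case True
  then have "a = 0" and "b = 0" using assms by auto
  then show ?thesis using g0 by simp
next
  case False
  define s where "s = a + b"
  have s: "0 < s" "s \<in> {0..1}" using False assms by (auto simp: s_def)
  have "t / s * g s \<le> g t" if "0 \<le> t" "t \<le> s" for t
    using concave_on_scale_ge[OF cc g0 s(2), of "t / s"] that s(1) by simp
  then have "a / s * g s + b / s * g s \<le> g a + g b"
    using assms by (intro add_mono) (auto simp: s_def)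
  moreover have "a / s * g s + b / s * g s = g s"
    using s(1) by (simp add: s_def flip: distrib_right add_divide_distrib)
  ultimately show ?thesis by (simp add: s_def)
qed

lemma concave_on_sum_le:
  fixes g :: "real \<Rightarrow> real"
  assumes cc: "concave_on {0..1} g" and g0: "g 0 = 0"
    and "finite F" and "\<forall>x\<in>F. 0 \<le> f x" and "sum f F \<le> 1"
  shows "g (sum f F) \<le> (\<Sum>x\<in>F. g (f x))"
  using assms(3-)
proof (induction F rule: finite_induct)
  case empty
  then show ?case using g0 by simp
next
  case (insert x F)
  have nonneg: "0 \<le> sum f F" using insert by (auto intro: sum_nonneg)
  have "g (sum f (insert x F)) = g (f x + sum f F)" using insert by simp
  also have "\<dots> \<le> g (f x) + g (sum f F)"
    by (rule concave_on_subadditive[OF cc g0]) (use insert nonneg in auto)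
  also have "\<dots> \<le> g (f x) + (\<Sum>y\<in>F. g (f y))"
    using insert nonneg by auto
  finally show ?case using insert by simp
qed

lemma (in finite_measure) measure_eq_sum_Int_partition:
  assumes "finite_partition M R" and "A \<in> sets M"
  shows "measure M A = (\<Sum>B\<in>R. measure M (A \<inter> B))"
proof -
  have R: "finite R" "R \<subseteq> sets M" "\<Union>R = space M" "disjoint R"
    using assms(1) by (auto simp: finite_partition_def)
  have "measure M A = measure M (\<Union>B\<in>R. A \<inter> B)"
    using R(3) sets.sets_into_space[OF assms(2)] by (simp add: Int_Union[symmetric] Int_absorb2)
  also have "\<dots> = (\<Sum>B\<in>R. measure M (A \<inter> B))"
  proof (rule measure_finite_Union)
    show "disjoint_family_on (\<lambda>B. A \<inter> B) R"
      unfolding disjoint_family_on_def by (auto dest: disjointD[OF R(4)])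
  qed (use R assms(2) in auto)
  finally show ?thesis .
qed

lemma gen_H_le_refinement:
  fixes g :: "real \<Rightarrow> real"
  assumes "prob_space M" and cc: "concave_on {0..1} g" and g0: "g 0 = 0"
    and Q: "finite_partition M Q" and R: "finite_partition M R"
    and refines: "\<forall>B\<in>R. \<exists>A\<in>Q. B \<subseteq> A"
  shows "gen_H M g Q \<le> gen_H M g R"
proof -
  interpret prob_space M by fact
  have QR: "finite Q" "finite R" "Q \<subseteq> sets M" "R \<subseteq> sets M"
    using Q R by (auto simp: finite_partition_def)
  have cell: "g (measure M B) = (\<Sum>A\<in>Q. g (measure M (A \<inter> B)))" if "B \<in> R" for B
  proof -
    obtain A0 where A0: "A0 \<in> Q" "B \<subseteq> A0" using refines \<open>B \<in> R\<close> by blast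
    have "A \<inter> B = {}" if "A \<in> Q - {A0}" for A
      using that A0 Q unfolding finite_partition_def disjoint_def by blast
    then have "(\<Sum>A\<in>Q - {A0}. g (measure M (A \<inter> B))) = 0"
      using g0 by simp
    moreover have "A0 \<inter> B = B" using A0 by blast
    ultimately show ?thesis
      using sum.remove[OF QR(1) A0(1), of "\<lambda>A. g (measure M (A \<inter> B))"] by simp
  qed
  have "gen_H M g Q = (\<Sum>A\<in>Q. g (\<Sum>B\<in>R. measure M (A \<inter> B)))"
    unfolding gen_H_def using QR by (intro sum.cong refl arg_cong[where f = g]
      measure_eq_sum_Int_partition[OF R]) auto
  also have "\<dots> \<le> (\<Sum>A\<in>Q. \<Sum>B\<in>R. g (measure M (A \<inter> B)))"
  proof (rule sum_mono)
    fix A assume "A \<in> Q"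
    then have "(\<Sum>B\<in>R. measure M (A \<inter> B)) \<le> 1"
      using QR measure_eq_sum_Int_partition[OF R] by (metis prob_le_1 subsetD)
    then show "g (\<Sum>B\<in>R. measure M (A \<inter> B)) \<le> (\<Sum>B\<in>R. g (measure M (A \<inter> B)))"
      using QR by (intro concave_on_sum_le[OF cc g0]) auto
  qed
  also have "\<dots> = (\<Sum>B\<in>R. \<Sum>A\<in>Q. g (measure M (A \<inter> B)))"
    by (rule sum.swap)
  also have "\<dots> = gen_H M g R"
    unfolding gen_H_def using cell by simp
  finally show ?thesis .
qed

lemma measurable_funpow: "f \<in> M \<rightarrow>\<^sub>M M \<Longrightarrow> (f ^^ n) \<in> M \<rightarrow>\<^sub>M M"
  by (induction n) auto

lemma finite_iter_join:
  assumes "finite P"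
  shows "finite (iter_join M S P n)"
proof -
  let ?cell = "\<lambda>c. space M \<inter> (\<Inter>i\<in>{..<n}. (S ^^ i) -` c i)"
  have "iter_join M S P n \<subseteq> ?cell ` (PiE {..<n} (\<lambda>_. P))"
  proof
    fix A assume "A \<in> iter_join M S P n"
    then obtain c where c: "\<forall>i<n. c i \<in> P" "A = ?cell c" unfolding iter_join_def by blast
    then have "restrict c {..<n} \<in> PiE {..<n} (\<lambda>_. P)" and "A = ?cell (restrict c {..<n})"
      by auto
    then show "A \<in> ?cell ` (PiE {..<n} (\<lambda>_. P))" by blast
  qed
  moreover have "finite (?cell ` (PiE {..<n} (\<lambda>_. P)))"
    using assms by (simp add: finite_PiE)
  ultimately show ?thesis by (rule finite_subset)
qed

lemma iter_join_sets:
  assumes "S \<in> M \<rightarrow>\<^sub>M M" and "P \<subseteq> sets M"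
  shows "iter_join M S P n \<subseteq> sets M"
proof
  fix A assume "A \<in> iter_join M S P n"
  then obtain c where c: "\<forall>i<n. c i \<in> P" "A = space M \<inter> (\<Inter>i\<in>{..<n}. (S ^^ i) -` c i)"
    unfolding iter_join_def by blast
  show "A \<in> sets M"
  proof (cases "n = 0")
    case True
    then show ?thesis using c by simp
  next
    case False
    then have "A = (\<Inter>i\<in>{..<n}. (S ^^ i) -` c i \<inter> space M)" using c by auto
    also have "\<dots> \<in> sets M"
      using False c assms measurable_funpow[OF assms(1)] by (intro sets.finite_INT) auto
    finally show ?thesis .
  qed
qed

lemma Union_iter_join:
  assumes "S \<in> M \<rightarrow>\<^sub>M M" and "\<Union>P = space M"
  shows "\<Union>(iter_join M S P n) = space M"
proof
  show "\<Union>(iter_join M S P n) \<subseteq> space M" unfolding iter_join_def by auto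
  show "space M \<subseteq> \<Union>(iter_join M S P n)"
  proof
    fix x assume x: "x \<in> space M"
    have "\<exists>A. A \<in> P \<and> (S ^^ i) x \<in> A" for i
      using measurable_space[OF measurable_funpow[OF assms(1)] x] assms(2) by blast
    then obtain c where c: "\<And>i. c i \<in> P \<and> (S ^^ i) x \<in> c i" by metis
    have "space M \<inter> (\<Inter>i\<in>{..<n}. (S ^^ i) -` c i) \<in> iter_join M S P n"
      unfolding iter_join_def using c by blast
    then show "x \<in> \<Union>(iter_join M S P n)" using c x by blast
  qed
qed

lemma disjoint_iter_join:
  assumes "disjoint P"
  shows "disjoint (iter_join M S P n)"
proof (rule disjointI)
  fix A B assume A: "A \<in> iter_join M S P n" and B: "B \<in> iter_join M S P n" and "A \<noteq> B"
  obtain c where c: "\<forall>i<n. c i \<in> P" "A = space M \<inter> (\<Inter>i\<in>{..<n}. (S ^^ i) -` c i)"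
    using A unfolding iter_join_def by blast
  obtain d where d: "\<forall>i<n. d i \<in> P" "B = space M \<inter> (\<Inter>i\<in>{..<n}. (S ^^ i) -` d i)"
    using B unfolding iter_join_def by blast
  show "A \<inter> B = {}"
  proof (rule ccontr)
    assume "A \<inter> B \<noteq> {}"
    then obtain x where x: "x \<in> A" "x \<in> B" by blast
    have "c i = d i" if "i < n" for i
    proof -
      have "(S ^^ i) x \<in> c i \<inter> d i" using x c d that by auto
      then show ?thesis using disjointD[OF assms, of "c i" "d i"] c d that by blast
    qed
    then have "A = B" using c d by auto
    with \<open>A \<noteq> B\<close> show False ..
  qed
qed

lemma finite_partition_iter_join:
  assumes "S \<in> M \<rightarrow>\<^sub>M M" and "finite_partition M P"
  shows "finite_partition M (iter_join M S P n)"
proof -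
  have P: "finite P" "P \<subseteq> sets M" "\<Union>P = space M" "disjoint P"
    using assms(2) by (auto simp: finite_partition_def)
  show ?thesis
    unfolding finite_partition_def
    using finite_iter_join[OF P(1)] iter_join_sets[OF assms(1) P(2)]
      Union_iter_join[OF assms(1) P(3)] disjoint_iter_join[OF P(4)] by blast
qed

lemma iter_join_funpow_refines:
  assumes "0 < m"
  shows "\<forall>B\<in>iter_join M T P (m * n). \<exists>A\<in>iter_join M (T ^^ m) P n. B \<subseteq> A"
proof
  fix B assume "B \<in> iter_join M T P (m * n)"
  then obtain c where c: "\<forall>i<m*n. c i \<in> P" "B = space M \<inter> (\<Inter>i\<in>{..<m*n}. (T ^^ i) -` c i)"
    unfolding iter_join_def by blast
  have lt: "m * i < m * n" if "i < n" for i using that assms by simp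
  define d where "d i = c (m * i)" for i
  let ?A = "space M \<inter> (\<Inter>i\<in>{..<n}. ((T ^^ m) ^^ i) -` d i)"
  have "\<forall>i<n. d i \<in> P" using c lt by (auto simp: d_def)
  then have "?A \<in> iter_join M (T ^^ m) P n" unfolding iter_join_def by blast
  moreover have "B \<subseteq> ?A"
  proof
    fix x assume x: "x \<in> B"
    have "x \<in> ((T ^^ m) ^^ i) -` d i" if "i < n" for i
      using x c lt[OF that] by (auto simp: d_def funpow_mult)
    then show "x \<in> ?A" using x c by auto
  qed
  ultimately show "\<exists>A\<in>iter_join M (T ^^ m) P n. B \<subseteq> A" by blast
qed

lemma limsup_le_mult_limsup_subseq:
  fixes x y :: "nat \<Rightarrow> ereal"
  assumes "0 \<le> c" and "strict_mono r" and "\<And>n. x n \<le> ereal c * y (r n)"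
  shows "limsup x \<le> ereal c * limsup y"
proof -
  have "limsup x \<le> limsup (\<lambda>n. ereal c * (y \<circ> r) n)"
    by (rule Limsup_mono) (use assms(3) in auto)
  also have "\<dots> = ereal c * limsup (y \<circ> r)"
    using assms(1) by (rule limsup_ereal_mult_left)
  also have "\<dots> \<le> ereal c * limsup y"
    using assms(1,2) by (intro ereal_mult_left_mono limsup_subseq_mono) auto
  finally show ?thesis .
qed

lemma gen_entropy_part_funpow_le:
  fixes g :: "real \<Rightarrow> real"
  assumes ps: "prob_space M" and T: "T \<in> M \<rightarrow>\<^sub>M M" and "0 < m"
    and cc: "concave_on {0..1} g" and g0: "g 0 = 0" and P: "finite_partition M P"
  shows "gen_entropy_part M g (T ^^ m) P \<le> ereal (real m) * gen_entropy_part M g T P"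
  unfolding gen_entropy_part_def
proof (rule limsup_le_mult_limsup_subseq)
  show "strict_mono ((*) m)" using \<open>0 < m\<close> by (simp add: strict_mono_def)
  fix n
  show "ereal (gen_H M g (iter_join M (T ^^ m) P n) / real n)
      \<le> ereal (real m) * ereal (gen_H M g (iter_join M T P (m * n)) / real (m * n))"
  proof (cases "n = 0")
    case False
    have "gen_H M g (iter_join M (T ^^ m) P n) \<le> gen_H M g (iter_join M T P (m * n))"
      using measurable_funpow[OF T] by (intro gen_H_le_refinement[OF ps cc g0]
        finite_partition_iter_join P T iter_join_funpow_refines \<open>0 < m\<close>)
    then show ?thesis
      using False \<open>0 < m\<close> by (simp add: divide_right_mono)
  qed simp
qed simp

lemma gen_entropy_funpow_le:
  fixes g :: "real \<Rightarrow> real"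
  assumes "prob_space M" and "T \<in> M \<rightarrow>\<^sub>M M" and "0 < m"
    and "concave_on {0..1} g" and "g 0 = 0"
  shows "gen_entropy M g (T ^^ m) \<le> ereal (real m) * gen_entropy M g T"
  unfolding gen_entropy_def
proof (rule SUP_least)
  fix P assume "P \<in> {P. finite_partition M P}"
  then have "gen_entropy_part M g (T ^^ m) P \<le> ereal (real m) * gen_entropy_part M g T P"
    using assms by (intro gen_entropy_part_funpow_le) auto
  also have "\<dots> \<le> ereal (real m) * (SUP P\<in>{P. finite_partition M P}. gen_entropy_part M g T P)"
    using \<open>P \<in> _\<close> by (intro ereal_mult_left_mono SUP_upper) auto
  finally show "gen_entropy_part M g (T ^^ m) P
      \<le> ereal (real m) * (SUP P\<in>{P. finite_partition M P}. gen_entropy_part M g T P)" .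
qed

theorem mainTheorem16:
  fixes M :: "'a measure" and T :: "'a \<Rightarrow> 'a" and m :: nat and g :: "real \<Rightarrow> real"
  assumes "lebesgue_space M" and "automorphism M T" and "m \<ge> 1" and "g \<in> G0"
  shows "gen_entropy M g (T ^^ m) \<le> ereal (real m) * gen_entropy M g T"
proof (rule gen_entropy_funpow_le)
  show "prob_space M" using assms(1) by (simp add: lebesgue_space_def)
  show "T \<in> M \<rightarrow>\<^sub>M M" using assms(2) by (simp add: automorphism_def)
  show "0 < m" using assms(3) by simp
  show "concave_on {0..1} g" and "g 0 = 0" using assms(4) by (auto simp: G0_def)
qed

end
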